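(* Let $(E,\mathscr{T},\le)$ be a locally compact $T_2$-preordered Tychonoff space such that $G(\le)=\bigcap_{f\in\mathcal{F}}G_f$, and let $\mathcal{H}\subseteq\mathcal{F}$ with $G(\le)=\bigcap_{h\in\mathcal{H}}G_h$. Let $c:E\to cE$ be the $\mathcal{H}$-compactification. Then the remainder $cE\setminus c(E)$, endowed with the preorder induced from $\le_c$, is a $T_2$-ordered space (in particular $\le_c$ restricted to the remainder is antisymmetric).
   Context: $T_2$-preordered: the graph $G(\le)=\{(x,y):x\le y\}$ is closed in $E\times E$; $T_2$-ordered: additionally antisymmetric. $\mathcal{F}$ is the family of continuous isotone ($x\le y\Rightarrow f(x)\le f(y)$) functions $f:E\to[0,1]$; $G_f=\{(x,y):f(x)\le f(y)\}$. $\mathcal{C}$ is the family of continuous functions $E\to[0,1]$ that are constant outside some compact set. For $\mathcal{H}\subseteq\mathcal{F}$ with $G(\le)=\bigcap_{h\in\mathcal{H}}G_h$, the $\mathcal{H}$-compactification is the map $c:E\to[0,1]^{\mathcal{H}\cup\mathcal{C}}$, $c(x)=(g(x))_{g\in\mathcal{H}\cup\mathcal{C}}$, with $cE$ the closure of $c(E)$ in the product topology, $\mathscr{T}_c$ the induced topology, and $\le_c$ the restriction to $cE$ of the preorder $x\preceq y$ iff $x_h\le y_h$ for all $h\in\mathcal{H}$. *)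

theory Defs
  imports "HOL-Analysis.Analysis"
begin

definition graph_rel :: "'a topology \<Rightarrow> ('a \<Rightarrow> 'a \<Rightarrow> bool) \<Rightarrow> ('a \<times> 'a) set" where
  "graph_rel X le = {(x, y). x \<in> topspace X \<and> y \<in> topspace X \<and> le x y}"

definition preorder_on :: "'a set \<Rightarrow> ('a \<Rightarrow> 'a \<Rightarrow> bool) \<Rightarrow> bool" where
  "preorder_on S le \<longleftrightarrow> (\<forall>x\<in>S. le x x) \<and> (\<forall>x\<in>S. \<forall>y\<in>S. \<forall>z\<in>S. le x y \<longrightarrow> le y z \<longrightarrow> le x z)"

definition T2_preordered :: "'a topology \<Rightarrow> ('a \<Rightarrow> 'a \<Rightarrow> bool) \<Rightarrow> bool" where
  "T2_preordered X le \<longleftrightarrow> preorder_on (topspace X) le \<and> closedin (prod_topology X X) (graph_rel X le)"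

definition T2_ordered :: "'a topology \<Rightarrow> ('a \<Rightarrow> 'a \<Rightarrow> bool) \<Rightarrow> bool" where
  "T2_ordered X le \<longleftrightarrow> T2_preordered X le \<and>
     (\<forall>x\<in>topspace X. \<forall>y\<in>topspace X. le x y \<longrightarrow> le y x \<longrightarrow> x = y)"

definition isotone_fams :: "'a topology \<Rightarrow> ('a \<Rightarrow> 'a \<Rightarrow> bool) \<Rightarrow> ('a \<Rightarrow> real) set" where
  "isotone_fams X le = {f. continuous_map X (top_of_set {0..1}) f \<and>
      (\<forall>x\<in>topspace X. \<forall>y\<in>topspace X. le x y \<longrightarrow> f x \<le> f y)}"

definition const_off_compact :: "'a topology \<Rightarrow> ('a \<Rightarrow> real) set" where
  "const_off_compact X = {f. continuous_map X (top_of_set {0..1}) f \<and>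
      (\<exists>K a. compactin X K \<and> (\<forall>x\<in>topspace X - K. f x = a))}"

definition Gf :: "'a topology \<Rightarrow> ('a \<Rightarrow> real) \<Rightarrow> ('a \<times> 'a) set" where
  "Gf X f = {(x, y). x \<in> topspace X \<and> y \<in> topspace X \<and> f x \<le> f y}"

definition cube :: "'a topology \<Rightarrow> ('a \<Rightarrow> real) set \<Rightarrow> (('a \<Rightarrow> real) \<Rightarrow> real) topology" where
  "cube X H = product_topology (\<lambda>g. top_of_set {0..1}) (H \<union> const_off_compact X)"

definition cmap :: "'a topology \<Rightarrow> ('a \<Rightarrow> real) set \<Rightarrow> 'a \<Rightarrow> (('a \<Rightarrow> real) \<Rightarrow> real)" where
  "cmap X H x = (\<lambda>g\<in>H \<union> const_off_compact X. g x)"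

definition cE :: "'a topology \<Rightarrow> ('a \<Rightarrow> real) set \<Rightarrow> (('a \<Rightarrow> real) \<Rightarrow> real) set" where
  "cE X H = (cube X H) closure_of (cmap X H ` topspace X)"

definition le_c :: "('a \<Rightarrow> real) set \<Rightarrow> (('a \<Rightarrow> real) \<Rightarrow> real) \<Rightarrow> (('a \<Rightarrow> real) \<Rightarrow> real) \<Rightarrow> bool" where
  "le_c H y z \<longleftrightarrow> (\<forall>h\<in>H. y h \<le> z h)"

end

theory Submission
  imports Defs
begin

text \<open>On the H-coordinates antisymmetry of \<open>\<le>\<^sub>c\<close> is antisymmetry of the reals, so it
  suffices that all points of the remainder agree on the C-coordinates. Let \<open>g \<in> C\<close> be
  constant \<open>a\<close> outside a compact \<open>K\<close>. Then \<open>c(K)\<close> is compact, hence closed in the Hausdorff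
  cube, so a remainder point, lying in the closure of \<open>c(E)\<close> but not in \<open>c(K)\<close>, lies in the
  closure of \<open>c(E - K)\<close>, on which the \<open>g\<close>-coordinate is \<open>a\<close>. Closedness of the graph holds on
  every subspace of the cube, since it is an intersection of coordinatewise inequalities.\<close>

lemma closedin_continuous_maps_le:
  assumes "continuous_map X euclideanreal f" "continuous_map X euclideanreal g"
  shows "closedin X {x \<in> topspace X. f x \<le> g x}"
proof -
  have "closedin X {x \<in> topspace X. g x - f x \<in> {0..}}"
    by (intro closedin_continuous_map_preimage[of _ euclideanreal] continuous_map_diff assms)
      (simp add: closed_closedin[symmetric])
  then show ?thesis by simp
qed

lemma continuous_map_cube_coordinate:
  assumes "g \<in> H \<union> const_off_compact X"
  shows "continuous_map (cube X H) euclideanreal (\<lambda>y. y g)"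
proof -
  have "continuous_map (cube X H) (top_of_set {0..1}) (\<lambda>y. y g)"
    unfolding cube_def using assms by (rule continuous_map_product_projection)
  then show ?thesis by (simp add: continuous_map_in_subtopology)
qed

lemma topspace_cube_coordinate_undefined:
  "y \<in> topspace (cube X H) \<Longrightarrow> g \<notin> H \<union> const_off_compact X \<Longrightarrow> y g = undefined"
  by (auto simp: cube_def PiE_def extensional_def)

lemma continuous_map_cmap:
  assumes "\<And>h. h \<in> H \<Longrightarrow> continuous_map X (top_of_set {0..1}) h"
  shows "continuous_map X (cube X H) (cmap X H)"
  unfolding cube_def continuous_map_componentwise
proof (intro conjI ballI)
  show "cmap X H ` topspace X \<subseteq> extensional (H \<union> const_off_compact X)"
    by (auto simp: cmap_def)
next
  fix k assume k: "k \<in> H \<union> const_off_compact X"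
  then have "continuous_map X (top_of_set {0..1}) k"
    using assms by (auto simp: const_off_compact_def)
  then show "continuous_map X (top_of_set {0..1}) (\<lambda>x. cmap X H x k)"
    using k by (simp add: cmap_def)
qed

lemma Hausdorff_space_cube: "Hausdorff_space (cube X H)"
  unfolding cube_def Hausdorff_space_product_topology
  by (simp add: Hausdorff_space_subtopology)

lemma cE_subset_topspace_cube: "cE X H \<subseteq> topspace (cube X H)"
  unfolding cE_def by (rule closure_of_subset_topspace)

lemma remainder_coordinate_eq_const:
  assumes H: "\<And>h. h \<in> H \<Longrightarrow> continuous_map X (top_of_set {0..1}) h"
    and p: "p \<in> cE X H - cmap X H ` topspace X"
    and g: "g \<in> const_off_compact X"
    and K: "compactin X K" and a: "\<forall>x\<in>topspace X - K. g x = a"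
  shows "p g = a"
proof -
  let ?T = "cube X H" and ?c = "cmap X H"
  have c_cont: "continuous_map X ?T ?c"
    using H by (rule continuous_map_cmap)
  have KE: "K \<subseteq> topspace X"
    using K compactin_subset_topspace by auto
  have "closedin ?T (?c ` K)"
    by (rule compactin_imp_closedin[OF Hausdorff_space_cube image_compactin[OF K c_cont]])
  then have "p \<notin> ?T closure_of (?c ` K)"
    using p KE by (auto simp: closure_of_closedin)
  moreover have "?c ` topspace X = ?c ` K \<union> ?c ` (topspace X - K)"
    using KE by auto
  ultimately have p_cl: "p \<in> ?T closure_of (?c ` (topspace X - K))"
    using p unfolding cE_def by (metis DiffD1 UnE closure_of_Un)
  have level_closed: "closedin ?T {y \<in> topspace ?T. y g \<in> {a}}"
    using continuous_map_cube_coordinate g by (intro closedin_continuous_map_preimage) auto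
  have "?c ` (topspace X - K) \<subseteq> {y \<in> topspace ?T. y g \<in> {a}}"
    using c_cont a g by (auto simp: cmap_def continuous_map_def)
  from closure_of_minimal[OF this level_closed] p_cl show ?thesis
    by auto
qed

lemma remainder_coordinates_eq:
  assumes "\<And>h. h \<in> H \<Longrightarrow> continuous_map X (top_of_set {0..1}) h"
    and "p \<in> cE X H - cmap X H ` topspace X" "q \<in> cE X H - cmap X H ` topspace X"
    and g: "g \<in> const_off_compact X"
  shows "p g = q g"
proof -
  obtain K a where "compactin X K" "\<forall>x\<in>topspace X - K. g x = a"
    using g by (auto simp: const_off_compact_def)
  then show ?thesis
    using remainder_coordinate_eq_const[OF assms(1) _ g] assms(2,3) by metis
qed

lemma preorder_on_le_c: "preorder_on S (le_c H)"
  unfolding preorder_on_def le_c_def by (meson order_refl order_trans)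

lemma closedin_graph_le_c:
  assumes "S \<subseteq> topspace (cube X H)"
  shows "closedin (prod_topology (subtopology (cube X H) S) (subtopology (cube X H) S))
           (graph_rel (subtopology (cube X H) S) (le_c H))"
    (is "closedin ?PP _")
proof -
  let ?P = "subtopology (cube X H) S"
  have coord: "continuous_map ?P euclideanreal (\<lambda>y. y h)" if "h \<in> H" for h
    using that by (intro continuous_map_from_subtopology continuous_map_cube_coordinate) auto
  have "closedin ?PP {z \<in> topspace ?PP. fst z h \<le> snd z h}" if "h \<in> H" for h
    using coord[OF that]
    by (intro closedin_continuous_maps_le continuous_map_compose[OF continuous_map_fst, unfolded o_def]
        continuous_map_compose[OF continuous_map_snd, unfolded o_def])
  then have "closedin ?PP (\<Inter>(insert (topspace ?PP) ((\<lambda>h. {z \<in> topspace ?PP. fst z h \<le> snd z h}) ` H)))"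
    using closedin_topspace[of ?PP] by (intro closedin_Inter) auto
  moreover have "graph_rel ?P (le_c H)
      = \<Inter>(insert (topspace ?PP) ((\<lambda>h. {z \<in> topspace ?PP. fst z h \<le> snd z h}) ` H))"
    by (auto simp: graph_rel_def le_c_def)
  ultimately show ?thesis by simp
qed

lemma le_c_antisym_on_remainder:
  assumes H: "\<And>h. h \<in> H \<Longrightarrow> continuous_map X (top_of_set {0..1}) h"
    and p: "p \<in> cE X H - cmap X H ` topspace X" and q: "q \<in> cE X H - cmap X H ` topspace X"
    and "le_c H p q" "le_c H q p"
  shows "p = q"
proof
  fix g
  consider "g \<in> H" | "g \<in> const_off_compact X" | "g \<notin> H \<union> const_off_compact X"
    by blast
  then show "p g = q g"
  proof cases
    case 1
    then show ?thesis using assms(4,5) unfolding le_c_def by (meson order_antisym)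
  next
    case 2
    then show ?thesis using remainder_coordinates_eq[OF H p q] by blast
  next
    case 3
    then show ?thesis
      using p q cE_subset_topspace_cube topspace_cube_coordinate_undefined by (metis DiffD1 subsetD)
  qed
qed

theorem mainTheorem11:
  fixes X :: "'a topology" and le :: "'a \<Rightarrow> 'a \<Rightarrow> bool" and H :: "('a \<Rightarrow> real) set"
  assumes "locally_compact_space X"
    and "completely_regular_space X" and "Hausdorff_space X"
    and "T2_preordered X le"
    and "graph_rel X le = (topspace X \<times> topspace X) \<inter> (\<Inter>f\<in>isotone_fams X le. Gf X f)"
    and "H \<subseteq> isotone_fams X le"
    and "graph_rel X le = (topspace X \<times> topspace X) \<inter> (\<Inter>h\<in>H. Gf X h)"
  shows "T2_ordered (subtopology (cube X H) (cE X H - cmap X H ` topspace X)) (le_c H)"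
proof -
  let ?R = "cE X H - cmap X H ` topspace X"
  have H_cont: "\<And>h. h \<in> H \<Longrightarrow> continuous_map X (top_of_set {0..1}) h"
    using \<open>H \<subseteq> isotone_fams X le\<close> by (auto simp: isotone_fams_def)
  have R_sub: "?R \<subseteq> topspace (cube X H)"
    using cE_subset_topspace_cube by blast
  then have "topspace (subtopology (cube X H) ?R) = ?R"
    by (rule topspace_subtopology_subset)
  then show ?thesis
    unfolding T2_ordered_def T2_preordered_def
    using preorder_on_le_c closedin_graph_le_c[OF R_sub] le_c_antisym_on_remainder[OF H_cont]
    by auto
qed

end
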